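(* For every $\alpha\ge1$ and $\varepsilon>0$ there is no deterministic $\alpha$-approximation algorithm for the Weighted Monotone Subset Minimization problem in the membership model which runs in time $\left(\mathrm{brute}(\alpha)-\varepsilon\right)^n\cdot n^{O(1)}$, where $n=|U|$.
   Context: A set system $\mathcal{F}\subseteq 2^U$ over a finite set $U$ is monotone if $U\in\mathcal{F}$ and whenever $T\subseteq S\subseteq U$ and $T\in\mathcal{F}$ then $S\in\mathcal{F}$. An instance of the Weighted Monotone Subset Minimization problem (WSM) is a triple $(U,w,\mathcal{F})$ with $U$ finite, $w:U\to\mathbb{N}$ and $\mathcal{F}$ a monotone set system of $U$; the goal is to find $S\in\mathcal{F}$ minimizing $w(S)=\sum_{e\in S}w(e)$; $\mathrm{opt}(U,w,\mathcal{F})=\min\{w(S)\mid S\in\mathcal{F}\}$. In the membership model the algorithm receives $U$ and $w$ as input and may query, in a single step, whether a given $S\subseteq U$ belongs to $\mathcal{F}$. An algorithm is an $\alpha$-approximation for WSM in the membership model if for every instance it returns $S\in\mathcal{F}$ with $w(S)\le\alpha\cdot\mathrm{opt}(U,w,\mathcal{F})$. For $\alpha\ge1$, $\mathrm{brute}(\alpha)=1+\exp\left(-\alpha\cdot\mathcal{H}(1/\alpha)\right)$, where $\mathcal{H}(x)=-x\ln x-(1-x)\ln(1-x)$ (with $0\ln0=0$). *)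

theory Defs
  imports Complex_Main
begin

text \<open>Binary entropy (natural log); note ln 0 = 0 in Isabelle, matching 0 ln 0 = 0.\<close>
definition entropy :: "real \<Rightarrow> real" where
  "entropy x = - x * ln x - (1 - x) * ln (1 - x)"

definition brute :: "real \<Rightarrow> real" where
  "brute \<alpha> = 1 + exp (- \<alpha> * entropy (1 / \<alpha>))"

definition monotone_sys :: "'a set \<Rightarrow> 'a set set \<Rightarrow> bool" where
  "monotone_sys U F \<longleftrightarrow> F \<subseteq> Pow U \<and> U \<in> F \<and>
     (\<forall>T S. T \<subseteq> S \<and> S \<subseteq> U \<and> T \<in> F \<longrightarrow> S \<in> F)"

definition wt :: "('a \<Rightarrow> nat) \<Rightarrow> 'a set \<Rightarrow> nat" where
  "wt w S = (\<Sum>e\<in>S. w e)"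

definition opt :: "'a set \<Rightarrow> ('a \<Rightarrow> nat) \<Rightarrow> 'a set set \<Rightarrow> nat" where
  "opt U w F = Min (wt w ` F)"

text \<open>Deterministic adaptive query strategy in the membership model:
  a decision tree whose inner nodes are membership queries.\<close>
datatype 'a dtree = Leaf "'a set" | Query "'a set" "'a dtree" "'a dtree"

fun run :: "'a set set \<Rightarrow> 'a dtree \<Rightarrow> 'a set \<times> nat" where
  "run F (Leaf S) = (S, 0)"
| "run F (Query Q t1 t2) =
     (let r = run F (if Q \<in> F then t1 else t2) in (fst r, Suc (snd r)))"

text \<open>An algorithm maps the input (n = |U|, with U = {..<n}, and the weights w)
  to a query strategy.\<close>
type_synonym algorithm = "nat \<Rightarrow> (nat \<Rightarrow> nat) \<Rightarrow> nat dtree"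

definition is_approx :: "real \<Rightarrow> algorithm \<Rightarrow> bool" where
  "is_approx \<alpha> A \<longleftrightarrow> (\<forall>n w F. monotone_sys {..<n} F \<longrightarrow>
      (let S = fst (run F (A n w)) in
        S \<in> F \<and> real (wt w S) \<le> \<alpha> * real (opt {..<n} w F)))"

text \<open>Running time at least the number of oracle queries; bound c^n * n^O(1).\<close>
definition runs_within :: "real \<Rightarrow> algorithm \<Rightarrow> bool" where
  "runs_within b A \<longleftrightarrow> (\<exists>C (d::nat) N. \<forall>n w F. n \<ge> N \<longrightarrow> monotone_sys {..<n} F \<longrightarrow>
      real (snd (run F (A n w))) \<le> C * b ^ n * (real n + 1) ^ d)"

end

theory Submission
  imports Defs "HOL-Real_Asymp.Real_Asymp"
begin

text \<open>Take unit weights and fix \<open>k\<close> with \<open>t = \<lfloor>\<alpha> k\<rfloor> < n\<close>. For a \<open>k\<close>-set \<open>T\<close> the planted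
  system \<open>{S \<subseteq> U. T \<subseteq> S \<or> t < |S|}\<close> has optimum \<open>k\<close>, so an \<open>\<alpha>\<close>-approximation run on it must
  output a superset of \<open>T\<close> of size at most \<open>t\<close>. Answer all queries according to the threshold
  system \<open>{S \<subseteq> U. t < |S|}\<close>: a run on a planted system either coincides with this run or asks
  a query of size at most \<open>t\<close> containing \<open>T\<close>. Hence the \<open>q\<close> queries and the output of the
  threshold run, \<open>q + 1\<close> sets of size at most \<open>t\<close>, contain all \<open>k\<close>-subsets of \<open>U\<close>, and
  \<open>C(n, k) \<le> (q + 1) C(t, k)\<close>. With \<open>C(n, k) \<ge> exp (n H(k / n)) / (n + 1)\<close> and
  \<open>C(t, k) \<le> exp (\<alpha> H(1 / \<alpha>) k)\<close> this gives \<open>q + 1 \<ge> exp (n (H(x) - \<alpha> H(1 / \<alpha>) x)) / (n + 1)\<close>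
  for \<open>x = k / n\<close>, and the supremum of the exponent over \<open>x\<close> is \<open>ln (brute \<alpha>)\<close>.\<close>

fun queries :: "'a set set \<Rightarrow> 'a dtree \<Rightarrow> 'a set list" where
  "queries F (Leaf S) = []"
| "queries F (Query Q t1 t2) = Q # queries F (if Q \<in> F then t1 else t2)"

lemma length_queries: "length (queries F A) = snd (run F A)"
  by (induction A) (auto simp: Let_def)

lemma run_cong_queries:
  assumes "\<And>Q. Q \<in> set (queries F A) \<Longrightarrow> Q \<in> G \<longleftrightarrow> Q \<in> F"
  shows "run G A = run F A"
  using assms by (induction A) (auto simp: Let_def)

definition threshold_sys :: "'a set \<Rightarrow> nat \<Rightarrow> 'a set set" where
  "threshold_sys U t = {S. S \<subseteq> U \<and> t < card S}"

definition planted_sys :: "'a set \<Rightarrow> nat \<Rightarrow> 'a set \<Rightarrow> 'a set set" where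
  "planted_sys U t T = {S. S \<subseteq> U \<and> (T \<subseteq> S \<or> t < card S)}"

lemma monotone_sys_threshold_sys:
  assumes "finite U" "t < card U"
  shows "monotone_sys U (threshold_sys U t)"
  using assms by (auto simp: monotone_sys_def threshold_sys_def
      dest: card_mono[OF finite_subset] intro: less_le_trans)

lemma monotone_sys_planted_sys:
  assumes "finite U" "T \<subseteq> U"
  shows "monotone_sys U (planted_sys U t T)"
  using assms by (auto simp: monotone_sys_def planted_sys_def
      dest: card_mono[OF finite_subset] intro: less_le_trans)

lemma wt_unit: "wt (\<lambda>_. 1) = card"
  by (auto simp: wt_def)

lemma opt_planted_sys:
  assumes "finite U" "T \<subseteq> U" "card T \<le> t"
  shows "opt U (\<lambda>_. 1) (planted_sys U t T) = card T"
proof -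
  have "finite (planted_sys U t T)"
    using assms(1) by (auto simp: planted_sys_def intro: finite_subset[of _ "Pow U"])
  moreover have "card T \<le> card S" if "S \<in> planted_sys U t T" for S
    using that assms by (auto simp: planted_sys_def intro: card_mono finite_subset)
  moreover have "T \<in> planted_sys U t T" using assms by (simp add: planted_sys_def)
  ultimately show ?thesis unfolding opt_def wt_unit by (intro Min_eqI) auto
qed

lemma approx_output_planted_sys:
  assumes "is_approx \<alpha> A" "T \<subseteq> {..<n}" "card T \<le> t" "\<alpha> * card T < t + 1"
  defines "S \<equiv> fst (run (planted_sys {..<n} t T) (A n (\<lambda>_. 1)))"
  shows "S \<in> planted_sys {..<n} t T \<and> card S \<le> t"
proof -
  have "S \<in> planted_sys {..<n} t T \<and>
      real (wt (\<lambda>_. 1) S) \<le> \<alpha> * opt {..<n} (\<lambda>_. 1) (planted_sys {..<n} t T)"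
    using assms(1) monotone_sys_planted_sys[OF _ assms(2)]
    unfolding is_approx_def S_def Let_def by blast
  then show ?thesis
    using opt_planted_sys[OF _ assms(2,3)] assms(4) unfolding wt_unit by simp
qed

lemma card_subsets_le_cover:
  assumes "finite U" "finite Qs"
    and "\<And>Q. Q \<in> Qs \<Longrightarrow> finite Q \<and> card Q \<le> t"
    and "\<And>T. T \<subseteq> U \<Longrightarrow> card T = k \<Longrightarrow> \<exists>Q\<in>Qs. T \<subseteq> Q"
  shows "card U choose k \<le> card Qs * (t choose k)"
proof -
  have fin: "finite {T. T \<subseteq> Q \<and> card T = k}" if "Q \<in> Qs" for Q
    using assms(3)[OF that] by (simp add: finite_subset[of _ "Pow Q"] subset_eq)
  have "card U choose k = card {T. T \<subseteq> U \<and> card T = k}"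
    using assms(1) by (simp add: n_subsets)
  also have "\<dots> \<le> card (\<Union>Q\<in>Qs. {T. T \<subseteq> Q \<and> card T = k})"
    using assms(2,4) fin by (intro card_mono) auto
  also have "\<dots> \<le> (\<Sum>Q\<in>Qs. card {T. T \<subseteq> Q \<and> card T = k})"
    using assms(2) by (rule card_UN_le)
  also have "\<dots> \<le> (\<Sum>Q\<in>Qs. t choose k)"
    using assms(3) by (intro sum_mono) (simp add: n_subsets binomial_right_mono)
  finally show ?thesis by simp
qed

text \<open>A query on which a planted system and the threshold system disagree has size at most \<open>t\<close>
  and contains the planted set.\<close>
lemma adversary_bound:
  assumes "finite U"
    and "\<And>T. T \<subseteq> U \<Longrightarrow> card T = k \<Longrightarrow>
      fst (run (planted_sys U t T) A) \<in> planted_sys U t T \<and>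
      card (fst (run (planted_sys U t T) A)) \<le> t"
  shows "card U choose k \<le> (snd (run (threshold_sys U t) A) + 1) * (t choose k)"
proof -
  let ?F = "threshold_sys U t"
  let ?seen = "insert (fst (run ?F A)) (set (queries ?F A))"
  define Qs where "Qs = {Q \<in> ?seen. Q \<subseteq> U \<and> card Q \<le> t}"
  have cover: "\<exists>Q\<in>Qs. T \<subseteq> Q" if "T \<subseteq> U" "card T = k" for T
  proof (cases "\<forall>Q\<in>set (queries ?F A). Q \<in> planted_sys U t T \<longleftrightarrow> Q \<in> ?F")
    case True
    then have "run (planted_sys U t T) A = run ?F A" by (intro run_cong_queries) auto
    with assms(2)[OF that] show ?thesis by (auto simp: Qs_def planted_sys_def)
  next
    case False
    then obtain Q where "Q \<in> set (queries ?F A)" "(Q \<in> planted_sys U t T) \<noteq> (Q \<in> ?F)" by auto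
    then show ?thesis by (auto simp: Qs_def planted_sys_def threshold_sys_def)
  qed
  have "card Qs \<le> card ?seen" by (rule card_mono) (auto simp: Qs_def)
  also have "\<dots> \<le> length (queries ?F A) + 1"
    using card_length[of "queries ?F A"] by (simp add: card_insert_if)
  finally have "card Qs \<le> snd (run ?F A) + 1" by (simp add: length_queries)
  moreover have "card U choose k \<le> card Qs * (t choose k)"
    using assms(1) cover by (intro card_subsets_le_cover) (auto simp: Qs_def intro: finite_subset)
  ultimately show ?thesis by (meson le_trans mult_le_mono1)
qed

lemma le_nat_floor_mult:
  fixes \<alpha> :: real and k :: nat
  assumes "\<alpha> \<ge> 1"
  shows "k \<le> nat \<lfloor>\<alpha> * k\<rfloor>"
  using assms mult_right_mono[of 1 \<alpha> "real k"] by (simp add: le_nat_floor)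

lemma approx_threshold_queries_lower_bound:
  fixes n k :: nat
  assumes "is_approx \<alpha> A" "\<alpha> \<ge> 1"
  defines "t \<equiv> nat \<lfloor>\<alpha> * k\<rfloor>"
  shows "n choose k \<le> (snd (run (threshold_sys {..<n} t) (A n (\<lambda>_. 1))) + 1) * (t choose k)"
proof -
  have "k \<le> t" unfolding t_def using assms(2) by (rule le_nat_floor_mult)
  have "\<alpha> * k < t + 1" using assms(2) by (simp add: t_def) linarith
  show ?thesis
    using adversary_bound[of "{..<n}" k t] approx_output_planted_sys[OF assms(1)] \<open>k \<le> t\<close>
      \<open>\<alpha> * k < t + 1\<close> by simp
qed

lemma binomial_term_Suc:
  fixes a b n j :: nat
  assumes "j < n"
  shows "(n choose Suc j) * a ^ Suc j * b ^ (n - Suc j) * (Suc j * b)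
    = (n choose j) * a ^ j * b ^ (n - j) * ((n - j) * a)"
proof -
  have choose: "Suc j * (n choose Suc j) = (n - j) * (n choose j)"
    by (metis binomial_absorb_comp binomial_absorption)
  have power: "b ^ (n - Suc j) * b = b ^ (n - j)"
    using assms by (simp flip: power_Suc2 add: Suc_diff_Suc)
  have "(n choose Suc j) * a ^ Suc j * b ^ (n - Suc j) * (Suc j * b)
      = (Suc j * (n choose Suc j)) * a ^ Suc j * (b ^ (n - Suc j) * b)"
    by (simp only: mult_ac)
  also have "\<dots> = (n - j) * (n choose j) * a ^ Suc j * b ^ (n - j)"
    by (simp only: choose power)
  finally show ?thesis by (simp only: power_Suc mult_ac)
qed

text \<open>Consecutive terms of the expansion of \<open>(k + (n - k)) ^ n\<close> increase up to index \<open>k\<close>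
  and decrease after it.\<close>
lemma binomial_term_le_mean:
  fixes n k j :: nat
  assumes "0 < k" "k < n" "j \<le> n"
  shows "(n choose j) * k ^ j * (n - k) ^ (n - j) \<le> (n choose k) * k ^ k * (n - k) ^ (n - k)"
proof -
  define T where "T i = (n choose i) * k ^ i * (n - k) ^ (n - i)" for i
  have step: "T (Suc i) * (Suc i * (n - k)) = T i * ((n - i) * k)" if "i < n" for i
    using binomial_term_Suc[OF that] by (simp add: T_def)
  have pos: "0 < Suc i * (n - k)" for i
    using assms by simp
  have up: "T i \<le> T (Suc i)" if "i < k" for i
  proof -
    have "Suc i * (n - k) \<le> k * (n - i)"
      using that by (intro mult_mono) auto
    then have "T i * (Suc i * (n - k)) \<le> T (Suc i) * (Suc i * (n - k))"
      using step[of i] that assms by (simp add: mult.commute[of k] mult_left_mono)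
    then show ?thesis using pos mult_le_cancel2 by blast
  qed
  have down: "T (Suc i) \<le> T i" if "k \<le> i" "i < n" for i
  proof -
    have "(n - i) * k \<le> (n - k) * Suc i"
      using that by (intro mult_mono) auto
    then have "T (Suc i) * (Suc i * (n - k)) \<le> T i * (Suc i * (n - k))"
      using step[OF that(2)] by (simp add: mult.commute[of "n - k"] mult_left_mono)
    then show ?thesis using pos mult_le_cancel2 by blast
  qed
  have "T j \<le> T k"
  proof (cases "j \<le> k")
    case True
    show ?thesis by (rule lift_Suc_mono_le_ivl[of "{..<k}"]) (use up True in auto)
  next
    case False
    show ?thesis by (rule lift_Suc_antimono_le_ivl[of "{k..<n}"]) (use down False assms in auto)
  qed
  then show ?thesis by (simp add: T_def)
qed

lemma exp_entropy_le_binomial: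
  fixes n k :: nat
  assumes "k \<le> n"
  shows "exp (n * entropy (k / n)) \<le> (n + 1) * (n choose k)"
proof (cases "0 < k \<and> k < n")
  case False
  then have "k = 0 \<or> k = n" using assms by auto
  then show ?thesis by (auto simp: entropy_def)
next
  case True
  then have pos: "0 < real k" "0 < real (n - k)" "0 < real (n choose k)" by auto
  have "n ^ n = (k + (n - k)) ^ n"
    using assms by simp
  also have "\<dots> = (\<Sum>j\<le>n. (n choose j) * k ^ j * (n - k) ^ (n - j))"
    by (simp add: binomial_ring)
  also have "\<dots> \<le> (n + 1) * ((n choose k) * k ^ k * (n - k) ^ (n - k))"
    using sum_mono[of "{..n}" _ "\<lambda>_. (n choose k) * k ^ k * (n - k) ^ (n - k)"]
      binomial_term_le_mean True by simp
  finally have "real (n ^ n) \<le> real ((n + 1) * ((n choose k) * k ^ k * (n - k) ^ (n - k)))"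
    by (simp only: of_nat_le_iff)
  then have bound: "real n ^ n \<le> (n + 1) * (n choose k) * (real k ^ k * real (n - k) ^ (n - k))"
    by (simp only: of_nat_mult of_nat_power mult.assoc)
  have "n * entropy (k / n) = ln (real n ^ n / (real k ^ k * real (n - k) ^ (n - k)))"
  proof -
    have frac: "real k / n * n = k" "(1 - real k / n) * n = real (n - k)" "1 - real k / n = real (n - k) / n"
      using True by (simp_all add: field_simps)
    have "n * entropy (k / n)
        = - (real k / n * n) * ln (real k / n) - ((1 - real k / n) * n) * ln (1 - real k / n)"
      unfolding entropy_def by (simp add: algebra_simps)
    also have "\<dots> = - k * ln (real k / n) - real (n - k) * ln (1 - real k / n)"
      by (simp only: frac(1,2))
    also have "\<dots> = n * ln n - k * ln k - (n - k) * ln (real (n - k))"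
      using True pos by (simp add: frac(3) ln_div algebra_simps flip: of_nat_add)
    also have "\<dots> = ln (real n ^ n / (real k ^ k * real (n - k) ^ (n - k)))"
      using True pos by (simp add: ln_div ln_mult ln_realpow del: of_nat_diff)
    finally show ?thesis .
  qed
  then have "exp (n * entropy (k / n)) = real n ^ n / (real k ^ k * real (n - k) ^ (n - k))"
    using True pos by simp
  also have "\<dots> \<le> (n + 1) * (n choose k)"
    using bound pos by (subst pos_divide_le_eq) auto
  finally show ?thesis .
qed

text \<open>The binomial probability of \<open>k\<close> successes in \<open>t\<close> trials with success probability
  \<open>1 / \<alpha>\<close> is at most 1.\<close>
lemma binomial_le_exp_entropy_scaled:
  fixes \<alpha> :: real and k t :: nat
  assumes "\<alpha> \<ge> 1" "k \<le> t" "t \<le> \<alpha> * k"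
  shows "t choose k \<le> exp (\<alpha> * entropy (1 / \<alpha>) * k)"
proof (cases "\<alpha> = 1")
  case True
  then show ?thesis using assms by (simp add: entropy_def)
next
  case False
  then have "\<alpha> > 1" using assms by simp
  define p where "p = 1 / \<alpha>"
  have p: "0 < p" "p < 1" using \<open>\<alpha> > 1\<close> by (auto simp: p_def)
  have pos: "0 < real (t choose k)" using assms by simp
  have "(t choose k) * p ^ k * (1 - p) ^ (t - k) \<le> (\<Sum>j\<le>t. (t choose j) * p ^ j * (1 - p) ^ (t - j))"
    using assms p by (intro member_le_sum) auto
  also have "\<dots> = 1" by (simp flip: binomial_ring)
  finally have "ln ((t choose k) * p ^ k * (1 - p) ^ (t - k)) \<le> 0"
    using pos p by simp
  then have "ln (t choose k) + k * ln p + (t - k) * ln (1 - p) \<le> 0"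
    using pos p by (simp add: ln_mult ln_realpow del: of_nat_diff)
  then have "ln (t choose k) \<le> - k * ln p - (t - k) * ln (1 - p)"
    by simp
  also have "\<dots> \<le> - k * ln p - (\<alpha> - 1) * k * ln (1 - p)"
    using assms p by (intro diff_left_mono mult_right_mono_neg) (simp_all add: algebra_simps)
  also have "\<dots> = - (\<alpha> * p) * k * ln p - (\<alpha> * (1 - p)) * k * ln (1 - p)"
    using \<open>\<alpha> > 1\<close> by (simp add: p_def algebra_simps)
  also have "\<dots> = \<alpha> * entropy (1 / \<alpha>) * k"
    by (simp add: entropy_def p_def[symmetric] algebra_simps)
  finally show ?thesis using pos by (metis exp_le_cancel_iff exp_ln)
qed

lemma ln_le_entropy_scaled:
  assumes "\<alpha> \<ge> 1"
  shows "ln \<alpha> \<le> \<alpha> * entropy (1 / \<alpha>)"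
proof -
  have "\<alpha> * entropy (1 / \<alpha>) = ln \<alpha> - (\<alpha> - 1) * ln (1 - 1 / \<alpha>)"
    using assms by (simp add: entropy_def ln_div field_simps)
  moreover have "ln (1 - 1 / \<alpha>) \<le> 0" if "\<alpha> \<noteq> 1"
    using assms that by (subst ln_le_zero_iff) (auto simp: field_simps)
  ultimately show ?thesis
    using assms by (cases "\<alpha> = 1") (auto simp: mult_nonneg_nonpos)
qed

text \<open>The maximum of \<open>entropy x - c * x\<close>, attained where \<open>ln ((1 - x) / x) = c\<close>.\<close>
lemma entropy_sub_linear_at_logistic:
  fixes c :: real
  shows "entropy (1 / (1 + exp c)) - c * (1 / (1 + exp c)) = ln (1 + exp (- c))"
proof -
  define x where "x = 1 / (1 + exp c)"
  have pos: "0 < 1 + exp c" by (simp add: add_pos_pos)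
  have ln_x: "ln x = - ln (1 + exp c)"
    by (simp add: x_def ln_div)
  have ln_1x: "ln (1 - x) = c - ln (1 + exp c)"
  proof -
    have "1 - x = exp c / (1 + exp c)" using pos by (simp add: x_def field_simps)
    then show ?thesis using pos by (simp add: ln_div)
  qed
  have "entropy x - c * x = ln (1 + exp c) - c"
    unfolding entropy_def ln_x ln_1x by (simp add: algebra_simps)
  also have "\<dots> = ln (1 + exp (- c))"
  proof -
    have "1 + exp (- c) = (1 + exp c) / exp c" using pos by (simp add: exp_minus field_simps)
    then show ?thesis using pos by (simp add: ln_div)
  qed
  finally show ?thesis by (simp add: x_def)
qed

lemma rational_below_brute:
  fixes \<alpha> \<beta> :: real
  assumes "\<alpha> \<ge> 1" "0 < \<beta>" "\<beta> < brute \<alpha>"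
  obtains p q :: nat where "\<alpha> * p < q"
    "ln \<beta> < entropy (p / q) - \<alpha> * entropy (1 / \<alpha>) * (p / q)"
proof -
  define c where "c = \<alpha> * entropy (1 / \<alpha>)"
  define f where "f x = entropy x - c * x" for x
  define x0 where "x0 = 1 / (1 + exp c)"
  have pos: "0 < 1 + exp c" by (simp add: add_pos_pos)
  have x0: "0 < x0" "x0 < 1" using pos by (auto simp: x0_def field_simps)
  have "exp (ln \<alpha>) \<le> exp c"
    using ln_le_entropy_scaled[OF assms(1)] unfolding c_def by simp
  then have "\<alpha> \<le> exp c" using assms(1) by simp
  then have "\<alpha> * x0 < 1" using pos by (simp add: x0_def divide_less_eq)
  have "ln \<beta> < f x0"
    using assms entropy_sub_linear_at_logistic[of c]
    by (simp add: f_def x0_def brute_def c_def)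
  moreover have "isCont f x0"
    unfolding f_def entropy_def using x0 by (intro continuous_intros isCont_ln_pos) auto
  ultimately have "\<forall>\<^sub>F x in at x0. ln \<beta> < f x"
    by (simp add: isCont_def order_tendstoD(1))
  then obtain d where d: "d > 0" "\<And>x. x \<noteq> x0 \<Longrightarrow> dist x x0 < d \<Longrightarrow> ln \<beta> < f x"
    unfolding eventually_at by auto
  obtain r where r: "r \<in> \<rat>" "max (x0 - d) 0 < r" "r < x0"
    using Rats_dense_in_real[of "max (x0 - d) 0" x0] x0 d by auto
  then obtain p q :: nat where pq: "q \<noteq> 0" "r = p / q"
    using Rats_abs_nat_div_natE[OF r(1)] by (metis abs_of_pos max.strict_boundedE)
  show ?thesis
  proof
    have "\<alpha> * r \<le> \<alpha> * x0"
      using r assms(1) by (intro mult_left_mono) auto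
    then have "\<alpha> * r < 1" using \<open>\<alpha> * x0 < 1\<close> by linarith
    then show "\<alpha> * p < q" using pq by (simp add: field_simps)
    have "ln \<beta> < f r"
      using d r by (auto simp: dist_real_def)
    then show "ln \<beta> < entropy (p / q) - \<alpha> * entropy (1 / \<alpha>) * (p / q)"
      using pq by (simp add: f_def c_def)
  qed
qed

lemma approx_threshold_queries_exp:
  fixes \<alpha> :: real and n k :: nat
  assumes "is_approx \<alpha> A" "\<alpha> \<ge> 1" "\<alpha> * k < n"
  defines "t \<equiv> nat \<lfloor>\<alpha> * k\<rfloor>"
  shows "exp (n * (entropy (k / n) - \<alpha> * entropy (1 / \<alpha>) * (k / n)))
    \<le> (real n + 1) * (real (snd (run (threshold_sys {..<n} t) (A n (\<lambda>_. 1)))) + 1)"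
proof -
  define c where "c = \<alpha> * entropy (1 / \<alpha>)"
  let ?q = "snd (run (threshold_sys {..<n} t) (A n (\<lambda>_. 1)))"
  have "k \<le> t" unfolding t_def using assms(2) by (rule le_nat_floor_mult)
  have "real t \<le> \<alpha> * k" unfolding t_def using assms(2) by simp
  then have "t < n" using assms(3) by linarith
  have "exp (n * (entropy (k / n) - c * (k / n))) * exp (c * k) = exp (n * entropy (k / n))"
    using \<open>t < n\<close> by (simp flip: exp_add add: field_simps)
  also have "\<dots> \<le> real ((n + 1) * (n choose k))"
    using \<open>k \<le> t\<close> \<open>t < n\<close> exp_entropy_le_binomial[of k n] by simp
  also have "\<dots> \<le> real ((n + 1) * ((?q + 1) * (t choose k)))"
    using approx_threshold_queries_lower_bound[OF assms(1,2), of n k]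
    unfolding t_def of_nat_le_iff by (rule mult_left_mono) simp
  also have "\<dots> = (real n + 1) * (real ?q + 1) * real (t choose k)"
    by (simp add: algebra_simps)
  also have "\<dots> \<le> (real n + 1) * (real ?q + 1) * exp (c * k)"
    using binomial_le_exp_entropy_scaled[OF assms(2) \<open>k \<le> t\<close> \<open>real t \<le> \<alpha> * k\<close>]
    unfolding c_def by (intro mult_left_mono) auto
  finally show ?thesis unfolding c_def by simp
qed

lemma runs_within_mono:
  assumes "runs_within b A" "0 < b" "b \<le> b'"
  shows "runs_within b' A"
proof -
  obtain C d N where bound: "\<And>n w F. n \<ge> N \<Longrightarrow> monotone_sys {..<n} F \<Longrightarrow>
      real (snd (run F (A n w))) \<le> C * b ^ n * (real n + 1) ^ d"
    using assms(1) unfolding runs_within_def by blast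
  have "C * b ^ n * (real n + 1) ^ d \<le> \<bar>C\<bar> * b' ^ n * (real n + 1) ^ d" for n
    using assms(2,3) by (intro mult_right_mono mult_mono power_mono) auto
  then show ?thesis
    unfolding runs_within_def by (blast intro: order_trans bound)
qed

text \<open>For \<open>b \<le> 0\<close> the bound \<open>C * b ^ n\<close> is nonpositive for all \<open>n\<close> of a suitable parity,
  which would allow runs without queries; these cannot find a superset of a planted singleton.\<close>
lemma runs_within_base_pos:
  assumes "is_approx \<alpha> A" "\<alpha> \<ge> 1" "runs_within b A"
  shows "0 < b"
proof (rule ccontr)
  assume "\<not> 0 < b"
  obtain C d N where bound: "\<And>n w F. n \<ge> N \<Longrightarrow> monotone_sys {..<n} F \<Longrightarrow>
      real (snd (run F (A n w))) \<le> C * b ^ n * (real n + 1) ^ d"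
    using assms(3) unfolding runs_within_def by blast
  define t where "t = nat \<lfloor>\<alpha> * 1\<rfloor>"
  define n where "n = 2 * (N + t + 1) + (if C > 0 then 1 else 0)"
  have "t < n" "N \<le> n" by (auto simp: n_def)
  have "C * b ^ n \<le> 0"
  proof (cases "C > 0")
    case True
    then have "odd n" by (simp add: n_def)
    then show ?thesis using True \<open>\<not> 0 < b\<close> by (simp add: mult_nonneg_nonpos power_le_zero_eq odd_pos)
  next
    case False
    then have "even n" by (simp add: n_def)
    then show ?thesis using False by (simp add: mult_nonpos_nonneg zero_le_even_power)
  qed
  then have "C * b ^ n * (real n + 1) ^ d \<le> 0"
    by (simp add: mult_nonpos_nonneg)
  moreover have "monotone_sys {..<n} (threshold_sys {..<n} t)"
    using \<open>t < n\<close> by (intro monotone_sys_threshold_sys) auto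
  ultimately have "real (snd (run (threshold_sys {..<n} t) (A n (\<lambda>_. 1)))) \<le> 0"
    using bound[OF \<open>N \<le> n\<close>] by (meson order_trans)
  then have "n choose 1 \<le> t choose 1"
    using approx_threshold_queries_lower_bound[OF assms(1,2), of n 1] by (simp add: t_def)
  then show False using \<open>t < n\<close> by simp
qed

lemma runs_within_Suc_bound:
  assumes "runs_within b A" "1 \<le> b"
  obtains K d N where "\<And>n w F. n \<ge> N \<Longrightarrow> monotone_sys {..<n} F \<Longrightarrow>
      real (snd (run F (A n w))) + 1 \<le> K * b ^ n * (real n + 1) ^ d"
proof -
  obtain C d N where bound: "\<And>n w F. n \<ge> N \<Longrightarrow> monotone_sys {..<n} F \<Longrightarrow>
      real (snd (run F (A n w))) \<le> C * b ^ n * (real n + 1) ^ d"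
    using assms(1) unfolding runs_within_def by blast
  have "C * b ^ n * (real n + 1) ^ d + 1 \<le> (\<bar>C\<bar> + 1) * b ^ n * (real n + 1) ^ d" for n
  proof -
    have "1 \<le> b ^ n" "1 \<le> (real n + 1) ^ d"
      using assms(2) by simp_all
    then have "1 * 1 \<le> b ^ n * (real n + 1) ^ d"
      by (intro mult_mono) auto
    moreover have "C * (b ^ n * (real n + 1) ^ d) \<le> \<bar>C\<bar> * (b ^ n * (real n + 1) ^ d)"
      using assms(2) by (intro mult_right_mono) auto
    ultimately show ?thesis by (simp add: algebra_simps)
  qed
  then show ?thesis using that[of N "\<bar>C\<bar> + 1" d] bound by (meson add_right_mono order_trans)
qed

lemma exp_beats_poly_on_multiples:
  fixes D K :: real and q :: nat
  assumes "0 < D" "0 < q"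
  obtains m where "M \<le> m" "K * (real (q * m) + 1) ^ e < exp (D * real (q * m))"
proof -
  have "\<forall>\<^sub>F m in sequentially. K * (real (q * m) + 1) ^ e < exp (D * real (q * m))"
    using assms by real_asymp
  moreover have "\<forall>\<^sub>F m in sequentially. M \<le> m"
    by (rule eventually_ge_at_top)
  ultimately have "\<exists>m. K * (real (q * m) + 1) ^ e < exp (D * real (q * m)) \<and> M \<le> m"
    by (intro eventually_happens'[OF sequentially_bot] eventually_conj)
  then show ?thesis using that by blast
qed

text \<open>Against \<open>n = q m\<close>, \<open>k = p m\<close> the number of queries grows like
  \<open>exp (n * (entropy (p / q) - \<alpha> * entropy (1 / \<alpha>) * p / q))\<close>, which beats \<open>b ^ n\<close>
  up to polynomial factors.\<close>
lemma brute_le_runs_within: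
  assumes "is_approx \<alpha> A" "\<alpha> \<ge> 1" "runs_within b A" "1 \<le> b"
  shows "brute \<alpha> \<le> b"
proof (rule ccontr)
  assume "\<not> brute \<alpha> \<le> b"
  then have "0 < b" "b < brute \<alpha>" using assms(4) by auto
  then obtain p q :: nat where "\<alpha> * p < q"
    and gap: "ln b < entropy (p / q) - \<alpha> * entropy (1 / \<alpha>) * (p / q)"
    using rational_below_brute[OF assms(2)] by blast
  define D where "D = entropy (p / q) - \<alpha> * entropy (1 / \<alpha>) * (p / q) - ln b"
  have "0 < D" using gap by (simp add: D_def)
  have "0 \<le> \<alpha> * p" using assms(2) by simp
  then have "0 < q" using \<open>\<alpha> * p < q\<close> by linarith
  obtain K d N where bound: "\<And>n w F. n \<ge> N \<Longrightarrow> monotone_sys {..<n} F \<Longrightarrow>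
      real (snd (run F (A n w))) + 1 \<le> K * b ^ n * (real n + 1) ^ d"
    using runs_within_Suc_bound[OF assms(3,4)] by metis
  obtain m where poly: "K * (real (q * m) + 1) ^ (d + 1) < exp (D * real (q * m))"
    and "N + 1 \<le> m"
    using exp_beats_poly_on_multiples[OF \<open>0 < D\<close> \<open>0 < q\<close>] by blast
  define n k where "n = q * m" and "k = p * m"
  define t where "t = nat \<lfloor>\<alpha> * k\<rfloor>"
  have "\<alpha> * k < n"
    using \<open>\<alpha> * p < q\<close> \<open>N + 1 \<le> m\<close> mult_strict_right_mono[of "\<alpha> * p" q "real m"]
    by (simp add: n_def k_def mult.assoc)
  moreover have "real t \<le> \<alpha> * k" unfolding t_def using assms(2) by simp
  ultimately have mono: "monotone_sys {..<n} (threshold_sys {..<n} t)"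
    by (intro monotone_sys_threshold_sys) auto
  have "m \<le> n" using \<open>0 < q\<close> by (simp add: n_def)
  then have "N \<le> n" using \<open>N + 1 \<le> m\<close> by linarith
  have "real k / n = p / q" using \<open>0 < q\<close> \<open>N + 1 \<le> m\<close> by (simp add: n_def k_def)
  then have "exp (n * (D + ln b))
      \<le> (real n + 1) * (real (snd (run (threshold_sys {..<n} t) (A n (\<lambda>_. 1)))) + 1)"
    using approx_threshold_queries_exp[OF assms(1,2) \<open>\<alpha> * k < n\<close>] by (simp add: D_def t_def)
  also have "\<dots> \<le> (real n + 1) * (K * b ^ n * (real n + 1) ^ d)"
    using bound[OF \<open>N \<le> n\<close> mono] by (intro mult_left_mono) auto
  also have "\<dots> = K * (real n + 1) ^ (d + 1) * exp (n * ln b)"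
    using assms(4) by (simp add: exp_of_nat_mult)
  finally have "exp (D * n) * exp (n * ln b) \<le> K * (real n + 1) ^ (d + 1) * exp (n * ln b)"
    by (simp add: algebra_simps flip: exp_add)
  then have "exp (D * n) \<le> K * (real n + 1) ^ (d + 1)"
    by simp
  with poly show False by (simp add: n_def)
qed

theorem corollary2p2:
  fixes \<alpha> \<epsilon> :: real
  assumes "\<alpha> \<ge> 1" and "\<epsilon> > 0"
  shows "\<not> (\<exists>A. is_approx \<alpha> A \<and> runs_within (brute \<alpha> - \<epsilon>) A)"
proof
  assume "\<exists>A. is_approx \<alpha> A \<and> runs_within (brute \<alpha> - \<epsilon>) A"
  then obtain A where approx: "is_approx \<alpha> A" and runs: "runs_within (brute \<alpha> - \<epsilon>) A"
    by blast
  have "0 < brute \<alpha> - \<epsilon>"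
    using runs_within_base_pos[OF approx assms(1) runs] .
  then have "runs_within (max (brute \<alpha> - \<epsilon>) 1) A"
    using runs_within_mono[OF runs] by simp
  then have "brute \<alpha> \<le> max (brute \<alpha> - \<epsilon>) 1"
    using brute_le_runs_within[OF approx assms(1)] by simp
  moreover have "1 < brute \<alpha>" by (simp add: brute_def)
  ultimately show False using assms(2) by linarith
qed

end
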